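(* Let $N\ge 1$ and let $\mathcal{N}=(p_1,\ldots,p_N)$ with $p_i>0$ and $\sum_{i=1}^N p_i=1$ be fixed. For each positive integer $M$, let $X_1,\ldots,X_M$ be independent random variables with values in $\bar N=\{1,\ldots,N\}$ and $\Pr(X_j=i)=p_i$, and let $\Pr(K\mid M,\mathcal{N})$ be the probability that exactly $K$ distinct values occur among $X_1,\ldots,X_M$. For $s\subseteq\bar N$ write $\Pr(s)=\sum_{i\in s}p_i$. For $i=1,\ldots,N$ let $s_i=\bar N\setminus\{i\}$ and $q_{M,i}=1-\Pr(s_i)^M$, and define the Poisson binomial distribution \[ Q(K\mid M,\mathcal{N})=\sum_{\{s\subseteq\bar N:\ |s|=K\}}\prod_{i\in s}q_{M,i}\prod_{j\in\bar N\setminus s}(1-q_{M,j}). \] Then \[ \lim_{M\to\infty}\ \max_{K=1,\ldots,N}\bigl|\Pr(K\mid M,\mathcal{N})-Q(K\mid M,\mathcal{N})\bigr|=0. \]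
   Context: $Q(\cdot\mid M,\mathcal{N})$ is the distribution of the number of successes among $N$ independent Bernoulli trials with success probabilities $q_{M,1},\ldots,q_{M,N}$. *)

theory Defs
  imports Complex_Main "HOL-Library.FuncSet"
begin

definition Pr_set :: "(nat \<Rightarrow> real) \<Rightarrow> nat set \<Rightarrow> real" where
  "Pr_set p s = (\<Sum>i\<in>s. p i)"

text \<open>Outcomes are functions {1..M} -> {1..N}; by independence an outcome f has
  probability prod_j p (f j).\<close>
definition prob_distinct :: "nat \<Rightarrow> (nat \<Rightarrow> real) \<Rightarrow> nat \<Rightarrow> nat \<Rightarrow> real" where
  "prob_distinct N p M K =
     (\<Sum>f\<in>{f \<in> {1..M} \<rightarrow>\<^sub>E {1..N}. card (f ` {1..M}) = K}. \<Prod>j\<in>{1..M}. p (f j))"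

definition qMi :: "nat \<Rightarrow> (nat \<Rightarrow> real) \<Rightarrow> nat \<Rightarrow> nat \<Rightarrow> real" where
  "qMi N p M i = 1 - (Pr_set p ({1..N} - {i})) ^ M"

definition Q_pb :: "nat \<Rightarrow> (nat \<Rightarrow> real) \<Rightarrow> nat \<Rightarrow> nat \<Rightarrow> real" where
  "Q_pb N p M K =
     (\<Sum>s\<in>{s. s \<subseteq> {1..N} \<and> card s = K}.
        (\<Prod>i\<in>s. qMi N p M i) * (\<Prod>j\<in>{1..N} - s. 1 - qMi N p M j))"

end

theory Submission
  imports Defs
begin

text \<open>Both distributions converge to the point mass at \<open>N\<close>. An outcome misses some value \<open>i\<close>
  with probability at most \<open>\<Sum>\<^sub>i Pr(s\<^sub>i)\<^sup>M\<close> (union bound), and each \<open>Pr(s\<^sub>i) < 1\<close> because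
  \<open>p\<^sub>i > 0\<close>; so all \<open>N\<close> values occur with probability tending to \<open>1\<close>. Likewise
  \<open>q\<^sub>M\<^sub>,\<^sub>i = 1 - Pr(s\<^sub>i)\<^sup>M \<longrightarrow> 1\<close>, so the Poisson binomial law also concentrates on \<open>N\<close>
  successes.\<close>

lemma sum_UN_le:
  fixes f :: "'a \<Rightarrow> 'b::ordered_comm_monoid_add"
  assumes "finite I" "\<And>i. i \<in> I \<Longrightarrow> finite (S i)" "\<And>x. x \<in> (\<Union>i\<in>I. S i) \<Longrightarrow> f x \<ge> 0"
  shows "sum f (\<Union>i\<in>I. S i) \<le> (\<Sum>i\<in>I. sum f (S i))"
  using assms
proof (induction I rule: finite_induct)
  case (insert i I)
  have "sum f (S i \<union> (\<Union>j\<in>I. S j)) \<le> sum f (S i) + sum f (\<Union>j\<in>I. S j)"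
  proof -
    have "sum f (S i \<union> (\<Union>j\<in>I. S j)) + sum f (S i \<inter> (\<Union>j\<in>I. S j))
          = sum f (S i) + sum f (\<Union>j\<in>I. S j)"
      using insert.hyps insert.prems(1) by (intro sum.union_inter) auto
    moreover have "sum f (S i \<inter> (\<Union>j\<in>I. S j)) \<ge> 0"
      using insert.prems(2) by (intro sum_nonneg) auto
    ultimately show ?thesis by (metis add_increasing2 order_refl)
  qed
  also have "\<dots> \<le> sum f (S i) + (\<Sum>j\<in>I. sum f (S j))"
    using insert by (intro add_left_mono insert.IH) auto
  finally show ?case using insert.hyps by simp
qed simp

lemma sum_PiE_prod_eq_power:
  fixes p :: "'b \<Rightarrow> 'c::comm_semiring_1"
  assumes "finite A" "finite B"
  shows "(\<Sum>f\<in>A \<rightarrow>\<^sub>E B. \<Prod>j\<in>A. p (f j)) = (\<Sum>b\<in>B. p b) ^ card A"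
  using prod_sum_PiE[of A "\<lambda>_. B" "\<lambda>_. p"] assms by simp

lemma sum_not_surjective_le:
  fixes p :: "'b \<Rightarrow> real"
  assumes "finite A" "finite B" "\<And>b. b \<in> B \<Longrightarrow> p b \<ge> 0"
  shows "(\<Sum>f\<in>{f \<in> A \<rightarrow>\<^sub>E B. f ` A \<noteq> B}. \<Prod>j\<in>A. p (f j))
         \<le> (\<Sum>i\<in>B. (\<Sum>b\<in>B - {i}. p b) ^ card A)"
proof -
  have "{f \<in> A \<rightarrow>\<^sub>E B. f ` A \<noteq> B} = (\<Union>i\<in>B. A \<rightarrow>\<^sub>E (B - {i}))"
    by (auto simp: PiE_def Pi_def)
  moreover have "(\<Sum>f\<in>(\<Union>i\<in>B. A \<rightarrow>\<^sub>E (B - {i})). \<Prod>j\<in>A. p (f j))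
                 \<le> (\<Sum>i\<in>B. \<Sum>f\<in>A \<rightarrow>\<^sub>E (B - {i}). \<Prod>j\<in>A. p (f j))"
    using assms by (intro sum_UN_le) (auto simp: finite_PiE dest: PiE_mem intro!: prod_nonneg)
  ultimately show ?thesis
    using assms(1,2) by (simp add: sum_PiE_prod_eq_power)
qed

lemma sum_remove_less_one:
  fixes p :: "'b \<Rightarrow> real"
  assumes "finite B" "\<And>b. b \<in> B \<Longrightarrow> p b > 0" "sum p B = 1" "i \<in> B"
  shows "0 \<le> sum p (B - {i})" "sum p (B - {i}) < 1"
proof -
  show "0 \<le> sum p (B - {i})" using assms(2) by (intro sum_nonneg) (auto intro: less_imp_le)
  have "sum p B = p i + sum p (B - {i})" using assms(1,4) by (simp add: sum.remove)
  with assms(2)[OF assms(4)] assms(3) show "sum p (B - {i}) < 1" by simp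
qed

lemma power_sum_remove_tendsto_0:
  fixes p :: "'b \<Rightarrow> real"
  assumes "finite B" "\<And>b. b \<in> B \<Longrightarrow> p b > 0" "sum p B = 1" "i \<in> B"
  shows "(\<lambda>M. sum p (B - {i}) ^ M) \<longlonglongrightarrow> 0"
  using sum_remove_less_one[OF assms] by (intro LIMSEQ_power_zero) auto

lemma sum_not_surjective_tendsto_0:
  fixes p :: "'b \<Rightarrow> real"
  assumes "finite B" "\<And>b. b \<in> B \<Longrightarrow> p b > 0" "sum p B = 1"
  shows "(\<lambda>M. \<Sum>f\<in>{f \<in> {1..M} \<rightarrow>\<^sub>E B. f ` {1..M} \<noteq> B}. \<Prod>j\<in>{1..M}. p (f j)) \<longlonglongrightarrow> 0"
proof (rule tendsto_sandwich[OF _ _ tendsto_const])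
  have "0 \<le> (\<Sum>f\<in>{f \<in> {1..M} \<rightarrow>\<^sub>E B. f ` {1..M} \<noteq> B}. \<Prod>j\<in>{1..M}. p (f j))" for M :: nat
    by (intro sum_nonneg prod_nonneg less_imp_le assms(2)) (auto dest: PiE_mem)
  then show "\<forall>\<^sub>F M in sequentially. 0 \<le> (\<Sum>f\<in>{f \<in> {1..M} \<rightarrow>\<^sub>E B. f ` {1..M} \<noteq> B}. \<Prod>j\<in>{1..M}. p (f j))"
    by simp
  have "(\<Sum>f\<in>{f \<in> {1..M} \<rightarrow>\<^sub>E B. f ` {1..M} \<noteq> B}. \<Prod>j\<in>{1..M}. p (f j))
          \<le> (\<Sum>i\<in>B. sum p (B - {i}) ^ M)" for M :: nat
    using sum_not_surjective_le[of "{1..M}" B p] assms(1,2) by (auto intro: less_imp_le)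
  then show "\<forall>\<^sub>F M in sequentially. (\<Sum>f\<in>{f \<in> {1..M} \<rightarrow>\<^sub>E B. f ` {1..M} \<noteq> B}. \<Prod>j\<in>{1..M}. p (f j))
          \<le> (\<Sum>i\<in>B. sum p (B - {i}) ^ M)" by simp
  show "(\<lambda>M. \<Sum>i\<in>B. sum p (B - {i}) ^ M) \<longlonglongrightarrow> 0"
    using tendsto_sum[of B "\<lambda>i M. sum p (B - {i}) ^ M" "\<lambda>_. 0"]
          power_sum_remove_tendsto_0[OF assms] by simp
qed

lemma prob_distinct_tendsto:
  fixes N :: nat and p :: "nat \<Rightarrow> real"
  assumes "\<And>i. i \<in> {1..N} \<Longrightarrow> p i > 0" "(\<Sum>i\<in>{1..N}. p i) = 1"
  shows "(\<lambda>M. prob_distinct N p M K) \<longlonglongrightarrow> (if K = N then 1 else 0)"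
proof -
  define mass where "mass M F = (\<Sum>f\<in>F. \<Prod>j\<in>{1..M}. p (f j))" for M :: nat and F
  define bad where "bad M = {f \<in> {1..M} \<rightarrow>\<^sub>E {1..N}. f ` {1..M} \<noteq> {1..N}}" for M :: nat
  have bad_lim: "(\<lambda>M. mass M (bad M)) \<longlonglongrightarrow> 0"
    using sum_not_surjective_tendsto_0[of "{1..N}" p] assms unfolding mass_def bad_def by simp
  have image_card: "card (f ` {1..M}) = N \<longleftrightarrow> f ` {1..M} = {1..N}"
    if "f \<in> {1..M} \<rightarrow>\<^sub>E {1..N}" for f :: "nat \<Rightarrow> nat" and M :: nat
  proof
    assume "card (f ` {1..M}) = N"
    moreover have "f ` {1..M} \<subseteq> {1..N}" using that by (auto dest: PiE_mem)
    ultimately show "f ` {1..M} = {1..N}" by (intro card_subset_eq) auto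
  qed simp
  have nonneg: "0 \<le> (\<Prod>j\<in>{1..M}. p (f j))" if "f \<in> {1..M} \<rightarrow>\<^sub>E {1..N}" for f M
    using that by (intro prod_nonneg less_imp_le assms(1)) (auto dest: PiE_mem)
  show ?thesis
  proof (cases "K = N")
    case True
    have "prob_distinct N p M K = mass M ({1..M} \<rightarrow>\<^sub>E {1..N}) - mass M (bad M)" for M
    proof -
      have "{f \<in> {1..M} \<rightarrow>\<^sub>E {1..N}. card (f ` {1..M}) = K} = ({1..M} \<rightarrow>\<^sub>E {1..N}) - bad M"
        using image_card True by (auto simp: bad_def)
      then show ?thesis
        unfolding prob_distinct_def mass_def by (simp add: sum_diff finite_PiE bad_def)
    qed
    moreover have "mass M ({1..M} \<rightarrow>\<^sub>E {1..N}) = 1" for M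
      using assms(2) by (simp add: mass_def sum_PiE_prod_eq_power)
    ultimately show ?thesis
      using True tendsto_diff[OF tendsto_const[of 1] bad_lim] by simp
  next
    case False
    have "prob_distinct N p M K \<le> mass M (bad M)" for M
      unfolding prob_distinct_def mass_def
    proof (rule sum_mono2)
      show "finite (bad M)" by (simp add: bad_def finite_PiE)
      show "{f \<in> {1..M} \<rightarrow>\<^sub>E {1..N}. card (f ` {1..M}) = K} \<subseteq> bad M"
        using False image_card by (auto simp: bad_def)
      show "0 \<le> (\<Prod>j\<in>{1..M}. p (f j))" if "f \<in> bad M - {f \<in> {1..M} \<rightarrow>\<^sub>E {1..N}. card (f ` {1..M}) = K}" for f
        using nonneg that unfolding bad_def by blast
    qed
    moreover have "0 \<le> prob_distinct N p M K" for M
      unfolding prob_distinct_def by (intro sum_nonneg nonneg) simp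
    ultimately show ?thesis
      using False by (simp add: tendsto_sandwich[OF _ _ tendsto_const bad_lim])
  qed
qed

lemma poisson_binomial_tendsto_point_mass:
  fixes q :: "nat \<Rightarrow> 'a \<Rightarrow> real"
  assumes "finite S" "\<And>i. i \<in> S \<Longrightarrow> (\<lambda>M. q M i) \<longlonglongrightarrow> 1"
  shows "(\<lambda>M. \<Sum>s\<in>{s. s \<subseteq> S \<and> card s = K}. (\<Prod>i\<in>s. q M i) * (\<Prod>j\<in>S - s. 1 - q M j))
         \<longlonglongrightarrow> (if K = card S then 1 else 0)"
proof -
  let ?subsets = "{s. s \<subseteq> S \<and> card s = K}"
  have "(\<lambda>M. \<Sum>s\<in>?subsets. (\<Prod>i\<in>s. q M i) * (\<Prod>j\<in>S - s. 1 - q M j))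
        \<longlonglongrightarrow> (\<Sum>s\<in>?subsets. (\<Prod>i\<in>s. 1) * (\<Prod>j\<in>S - s. 1 - 1))"
    using assms(2) by (intro tendsto_sum tendsto_mult tendsto_prod tendsto_diff tendsto_const) auto
  also have "(\<Sum>s\<in>?subsets. (\<Prod>i\<in>s. 1) * (\<Prod>j\<in>S - s. 1 - 1 :: real))
             = (\<Sum>s\<in>?subsets. if s = S then 1 else 0)"
  proof (rule sum.cong[OF refl])
    fix s assume "s \<in> ?subsets"
    then have "s \<noteq> S \<Longrightarrow> card (S - s) > 0" using assms(1) by (auto simp: card_gt_0_iff)
    then show "(\<Prod>i\<in>s. 1) * (\<Prod>j\<in>S - s. 1 - 1 :: real) = (if s = S then 1 else 0)" by simp
  qed
  also have "\<dots> = (if K = card S then 1 else 0)"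
    using assms(1) by (auto intro: sum.neutral)
  finally show ?thesis .
qed

lemma Q_pb_tendsto:
  fixes N :: nat and p :: "nat \<Rightarrow> real"
  assumes "\<And>i. i \<in> {1..N} \<Longrightarrow> p i > 0" "(\<Sum>i\<in>{1..N}. p i) = 1"
  shows "(\<lambda>M. Q_pb N p M K) \<longlonglongrightarrow> (if K = N then 1 else 0)"
proof -
  have "(\<lambda>M. qMi N p M i) \<longlonglongrightarrow> 1" if "i \<in> {1..N}" for i
    using tendsto_diff[OF tendsto_const[of 1] power_sum_remove_tendsto_0[of "{1..N}" p i]]
          assms that by (simp add: qMi_def Pr_set_def)
  then show ?thesis
    unfolding Q_pb_def using poisson_binomial_tendsto_point_mass[of "{1..N}" "qMi N p" K] by simp
qed

lemma Max_abs_tendsto_0: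
  fixes f :: "nat \<Rightarrow> 'a \<Rightarrow> real"
  assumes "finite A" "A \<noteq> {}" "\<And>K. K \<in> A \<Longrightarrow> (\<lambda>M. f M K) \<longlonglongrightarrow> 0"
  shows "(\<lambda>M. Max ((\<lambda>K. \<bar>f M K\<bar>) ` A)) \<longlonglongrightarrow> 0"
proof (rule tendsto_sandwich[OF _ _ tendsto_const])
  show "\<forall>\<^sub>F M in sequentially. 0 \<le> Max ((\<lambda>K. \<bar>f M K\<bar>) ` A)"
    using assms(1,2) by (auto simp: Max_ge_iff)
  have "\<forall>a\<in>A. \<bar>f M a\<bar> \<le> (\<Sum>K\<in>A. \<bar>f M K\<bar>)" for M
    using assms(1) by (intro ballI member_le_sum) auto
  then show "\<forall>\<^sub>F M in sequentially. Max ((\<lambda>K. \<bar>f M K\<bar>) ` A) \<le> (\<Sum>K\<in>A. \<bar>f M K\<bar>)"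
    using assms(1,2) by simp
  show "(\<lambda>M. \<Sum>K\<in>A. \<bar>f M K\<bar>) \<longlonglongrightarrow> 0"
    using tendsto_sum[of A "\<lambda>K M. \<bar>f M K\<bar>" "\<lambda>_. 0" sequentially]
          tendsto_rabs_zero[OF assms(3)] by simp
qed

theorem theorem1:
  fixes N :: nat and p :: "nat \<Rightarrow> real"
  assumes "N \<ge> 1"
    and "\<And>i. i \<in> {1..N} \<Longrightarrow> p i > 0"
    and "(\<Sum>i\<in>{1..N}. p i) = 1"
  shows "(\<lambda>M. Max ((\<lambda>K. \<bar>prob_distinct N p M K - Q_pb N p M K\<bar>) ` {1..N}))
           \<longlonglongrightarrow> 0"
proof (rule Max_abs_tendsto_0)
  fix K
  show "(\<lambda>M. prob_distinct N p M K - Q_pb N p M K) \<longlonglongrightarrow> 0"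
    using tendsto_diff[OF prob_distinct_tendsto[of N p K] Q_pb_tendsto[of N p K]] assms(2,3) by simp
qed (use assms(1) in auto)

end
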